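(* Let $A$ take values $a_1,\ldots,a_{N_A}$ and $B$ take values $b_1,\ldots,b_{N_B}$, and let $P$ be a generalized two-variable probability assignment (as defined in the context) satisfying Axiom 5, with $\mathbf{P}(A|B)$ invertible. Let $\mathbf{P}(A,B)$ be a non-product joint distribution. Then $$\mathbf{P}(B,A)=\mathbf{P}(B)\,\mathbf{P}(A,B)^{-1}\,\mathbf{P}(A).$$
   Context: Generalized two-variable probability assignment: $P(a_i,b_j)$ denotes the (real-valued, not necessarily nonnegative) probability of $a_i$ and $b_j$ relative to the ordering in which $B$ precedes $A$, and $P(b_j,a_i)$ the probability relative to the ordering in which $A$ precedes $B$. These satisfy $\sum_{i,j}P(a_i,b_j)=1=\sum_{i,j}P(b_j,a_i)$ and the marginals are ordering-independent: $P(a_i)=\sum_j P(a_i,b_j)=\sum_j P(b_j,a_i)$, $P(b_j)=\sum_i P(a_i,b_j)=\sum_i P(b_j,a_i)$. Conditionals: $P(a_i|b_j)=P(a_i,b_j)/P(b_j)$, $P(b_j|a_i)=P(b_j,a_i)/P(a_i)$ (marginals assumed nonzero). Matrices: $\mathbf{P}(A,B)$ is $N_A\times N_B$ with entries $P(a_i,b_j)$; $\mathbf{P}(B,A)$ is $N_B\times N_A$ with entries $P(b_j,a_i)$; $\mathbf{P}(A|B)$ is $N_A\times N_B$ with entries $P(a_i|b_j)$; $\mathbf{P}(B|A)$ is $N_B\times N_A$ with entries $P(b_j|a_i)$; $\mathbf{P}(A)$ and $\mathbf{P}(B)$ are the diagonal matrices with the marginals $P(a_i)$, resp. $P(b_j)$,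 on the diagonal; $\vec P(A),\vec P(B)$ are the marginal vectors. Axiom 5 (inference axiom): $\mathbf{P}(A|B)$ and $\mathbf{P}(B|A)$ may be specified independently of $\vec P(B)$ and $\vec P(A)$, i.e. the same conditional matrices are consistent with $\vec P(A)=\mathbf{P}(A|B)\vec P(B)$ and $\vec P(B)=\mathbf{P}(B|A)\vec P(A)$ for every choice of the marginals. A distribution is a product distribution if $P(a_i,b_j)=P(a_i)P(b_j)$ for all $i,j$; otherwise non-product. *)

theory Defs
  imports "HOL-Analysis.Analysis"
begin

text \<open>Values of A are indexed by the finite type 'a (N_A = CARD('a)), values of B by
 the finite type 'b (N_B = CARD('b)).  PAB $ i $ j = P(a_i,b_j) (ordering B before A),
 PBA $ j $ i = P(b_j,a_i) (ordering A before B).\<close>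

definition margA :: "real^'b^'a \<Rightarrow> real^'a" where
  "margA PAB = (\<chi> i. \<Sum>j\<in>UNIV. PAB $ i $ j)"

definition margB :: "real^'b^'a \<Rightarrow> real^'b" where
  "margB PAB = (\<chi> j. \<Sum>i\<in>UNIV. PAB $ i $ j)"

definition condAB :: "real^'b^'a \<Rightarrow> real^'b^'a" where
  "condAB PAB = (\<chi> i j. PAB $ i $ j / margB PAB $ j)"

definition condBA :: "real^'b^'a \<Rightarrow> real^'a^'b \<Rightarrow> real^'a^'b" where
  "condBA PAB PBA = (\<chi> j i. PBA $ j $ i / margA PAB $ i)"

definition diagm :: "real^'n \<Rightarrow> real^'n^'n" where
  "diagm v = (\<chi> i j. if i = j then v $ i else 0)"

definition gen_prob2 :: "real^'b^'a \<Rightarrow> real^'a^'b \<Rightarrow> bool" where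
  "gen_prob2 PAB PBA \<longleftrightarrow>
     (\<Sum>i\<in>UNIV. \<Sum>j\<in>UNIV. PAB $ i $ j) = 1 \<and>
     (\<Sum>j\<in>UNIV. \<Sum>i\<in>UNIV. PBA $ j $ i) = 1 \<and>
     (\<forall>i. (\<Sum>j\<in>UNIV. PAB $ i $ j) = (\<Sum>j\<in>UNIV. PBA $ j $ i)) \<and>
     (\<forall>j. (\<Sum>i\<in>UNIV. PAB $ i $ j) = (\<Sum>i\<in>UNIV. PBA $ j $ i)) \<and>
     (\<forall>i. margA PAB $ i \<noteq> 0) \<and> (\<forall>j. margB PAB $ j \<noteq> 0)"

text \<open>Axiom 5: the conditional matrices are consistent with
 P(A) = P(A|B) P(B) and P(B) = P(B|A) P(A) for every choice of the marginals
 (vectors of generalized probabilities, i.e. real entries summing to 1).\<close>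
definition axiom5 :: "real^'b^'a \<Rightarrow> real^'a^'b \<Rightarrow> bool" where
  "axiom5 PAB PBA \<longleftrightarrow>
     (\<forall>pB :: real^'b. sum (\<lambda>j. pB $ j) UNIV = 1 \<longrightarrow>
        condBA PAB PBA *v (condAB PAB *v pB) = pB) \<and>
     (\<forall>pA :: real^'a. sum (\<lambda>i. pA $ i) UNIV = 1 \<longrightarrow>
        condAB PAB *v (condBA PAB PBA *v pA) = pA)"

definition product_dist :: "real^'b^'a \<Rightarrow> bool" where
  "product_dist PAB \<longleftrightarrow> (\<forall>i j. PAB $ i $ j = margA PAB $ i * margB PAB $ j)"

end

theory Submission
  imports Defs
begin

text \<open>Axiom 5 applied to the point masses (which are admissible marginal vectors) says
  exactly that \<open>P(B|A)\<close> is a two-sided inverse of \<open>P(A|B)\<close>. Since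
  \<open>P(A,B) = P(A|B) P(B)\<close> and \<open>P(B,A) = P(B|A) P(A)\<close>, the joint matrix is invertible with
  \<open>P(A,B)\<^sup>-\<^sup>1 = P(B)\<^sup>-\<^sup>1 P(B|A)\<close>, and solving for \<open>P(B|A)\<close> gives the claim.\<close>

lemma matrix_inv_unique:
  fixes A :: "'a::semiring_1^'n^'m" and B :: "'a^'m^'n"
  assumes AB: "A ** B = mat 1" and BA: "B ** A = mat 1"
  shows "matrix_inv A = B"
proof -
  have "A ** matrix_inv A = mat 1 \<and> matrix_inv A ** A = mat 1"
    unfolding matrix_inv_def by (rule someI[of _ B]) (use AB BA in blast)
  then have "matrix_inv A = matrix_inv A ** (A ** B)"
    using AB by simp
  also have "\<dots> = B"
    using \<open>A ** matrix_inv A = mat 1 \<and> matrix_inv A ** A = mat 1\<close>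
    by (simp add: matrix_mul_assoc)
  finally show ?thesis .
qed

lemma matrix_vector_mult_axis_component:
  "((M::'a::semiring_1^'n^'m) *v axis j 1) $ i = M $ i $ j"
  by (simp add: matrix_vector_mult_def axis_def if_distrib cong: if_cong)

lemma matrix_eq_mat_1_if_fixes_axes:
  fixes M :: "'a::semiring_1^'n^'n"
  assumes "\<And>j. M *v axis j 1 = axis j 1"
  shows "M = mat 1"
proof -
  have "M $ i $ j = mat 1 $ i $ j" for i j
    using matrix_vector_mult_axis_component[of M j i] assms[of j]
    by (simp add: mat_def axis_def)
  then show ?thesis
    by (simp add: vec_eq_iff)
qed

lemma matrix_mul_diagm_left: "(diagm v ** M) $ i $ j = v $ i * M $ i $ j"
proof -
  have "(diagm v ** M) $ i $ j = (\<Sum>k\<in>UNIV. (if i = k then v $ i else 0) * M $ k $ j)"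
    unfolding matrix_matrix_mult_def diagm_def by simp
  also have "\<dots> = (\<Sum>k\<in>UNIV. if i = k then v $ i * M $ k $ j else 0)"
    by (rule sum.cong) auto
  finally show ?thesis
    by simp
qed

lemma matrix_mul_diagm_right: "(M ** diagm v) $ i $ j = M $ i $ j * v $ j"
proof -
  have "(M ** diagm v) $ i $ j = (\<Sum>k\<in>UNIV. M $ i $ k * (if k = j then v $ k else 0))"
    unfolding matrix_matrix_mult_def diagm_def by simp
  also have "\<dots> = (\<Sum>k\<in>UNIV. if k = j then M $ i $ k * v $ j else 0)"
    by (rule sum.cong) auto
  finally show ?thesis
    by simp
qed

lemma diagm_mult_diagm: "diagm u ** diagm v = diagm (\<chi> i. u $ i * v $ i)"
  unfolding vec_eq_iff matrix_mul_diagm_left by (auto simp: diagm_def)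

lemma diagm_mult_diagm_inverse:
  assumes "\<And>i. v $ i \<noteq> 0"
  shows "diagm v ** diagm (\<chi> i. inverse (v $ i)) = mat 1"
    and "diagm (\<chi> i. inverse (v $ i)) ** diagm v = mat 1"
  using assms unfolding diagm_mult_diagm by (simp_all add: diagm_def mat_def vec_eq_iff)

lemma axiom5_cond_inverse:
  assumes "axiom5 PAB PBA"
  shows "condBA PAB PBA ** condAB PAB = mat 1"
    and "condAB PAB ** condBA PAB PBA = mat 1"
proof -
  have point_mass: "sum (\<lambda>k. axis j (1::real) $ k) UNIV = 1" for j :: "'n::finite"
    by (simp add: axis_def)
  show "condBA PAB PBA ** condAB PAB = mat 1" "condAB PAB ** condBA PAB PBA = mat 1"
    using assms point_mass
    by (auto intro!: matrix_eq_mat_1_if_fixes_axes simp: axiom5_def matrix_vector_mul_assoc)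
qed

lemma joint_eq_condAB_mult_margB:
  assumes "\<And>j. margB PAB $ j \<noteq> 0"
  shows "PAB = condAB PAB ** diagm (margB PAB)"
  using assms by (simp add: vec_eq_iff matrix_mul_diagm_right condAB_def)

lemma joint_eq_condBA_mult_margA:
  assumes "\<And>i. margA PAB $ i \<noteq> 0"
  shows "PBA = condBA PAB PBA ** diagm (margA PAB)"
  using assms by (simp add: vec_eq_iff matrix_mul_diagm_right condBA_def)

lemma matrix_inv_joint:
  assumes "axiom5 PAB PBA" and margB_nz: "\<And>j. margB PAB $ j \<noteq> 0"
  shows "matrix_inv PAB = diagm (\<chi> j. inverse (margB PAB $ j)) ** condBA PAB PBA"
proof (rule matrix_inv_unique)
  let ?C = "condAB PAB" and ?D = "condBA PAB PBA" and ?mB = "margB PAB"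
  let ?mB' = "\<chi> j. inverse (?mB $ j)"
  note PAB = joint_eq_condAB_mult_margB[OF margB_nz]
  note inverses = axiom5_cond_inverse[OF assms(1)] diagm_mult_diagm_inverse[OF margB_nz]
  have "PAB ** (diagm ?mB' ** ?D) = ?C ** (diagm ?mB ** diagm ?mB') ** ?D"
    by (subst PAB) (simp add: matrix_mul_assoc)
  then show "PAB ** (diagm ?mB' ** ?D) = mat 1"
    using inverses by simp
  have "diagm ?mB' ** ?D ** PAB = diagm ?mB' ** (?D ** ?C) ** diagm ?mB"
    by (subst PAB) (simp add: matrix_mul_assoc)
  then show "diagm ?mB' ** ?D ** PAB = mat 1"
    using inverses by simp
qed

theorem theorem2:
  fixes PAB :: "real^'b::finite^'a::finite" and PBA :: "real^'a^'b"
  assumes "gen_prob2 PAB PBA"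
    and "axiom5 PAB PBA"
    and "invertible (condAB PAB)"
    and "\<not> product_dist PAB"
  shows "PBA = diagm (margB PAB) ** matrix_inv PAB ** diagm (margA PAB)"
proof -
  have margA_nz: "\<And>i. margA PAB $ i \<noteq> 0" and margB_nz: "\<And>j. margB PAB $ j \<noteq> 0"
    using assms(1) by (auto simp: gen_prob2_def)
  have "diagm (margB PAB) ** matrix_inv PAB = condBA PAB PBA"
    using diagm_mult_diagm_inverse(1)[OF margB_nz]
    by (simp add: matrix_inv_joint[OF assms(2) margB_nz] matrix_mul_assoc)
  then show ?thesis
    using joint_eq_condBA_mult_margA[OF margA_nz] by simp
qed

end
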